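(* Let $V$ be a vector space over $\mathbb{F}_q$ with $q$ odd and a perfect square, and let $s_1,\dots,s_5$ be transvections in $\mathrm{SL}(V)$ such that $(s_1,s_2)$ and $(s_2,s_3)$ are two-way directed edges and $[s_3,s_4]$, $[s_4,s_5]$, $[s_5,s_3]$ are directed edges of $\Gamma(\mathcal T)$. Assume that $(s_1,s_3)$ is not a two-way directed edge. If $[s_1,s_3]$ is a one-way edge, then the triangle $(s_1,s_3,s_2)$ is non-unitary. If $[s_3,s_1]$ is a one-way edge, then the triangle $(s_1,s_2,s_3)$ is non-unitary. If neither $[s_1,s_3]$ nor $[s_3,s_1]$ is an edge, then $(s_1,s_3^{s_2})$ is a two-way directed edge and $[s_3^{s_2},s_4^{s_2}]$, $[s_4^{s_2},s_5^{s_2}]$, $[s_5^{s_2},s_3^{s_2}]$ are directed edges.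
   Context: Transvections $s=1+u_s\otimes\phi_s$, i.e. $x\mapsto x+\phi_s(x)u_s$ with $\phi_s(u_s)=0$; $\mathcal T$ is the set of all transvections of $\mathrm{SL}(V)$. $\Gamma(\mathcal T)$: directed graph with an edge $[s,t]$ iff $\phi_t(u_s)\ne0$; it is two-way if $[t,s]$ is also an edge, one-way otherwise. $s^g=g^{-1}sg$. Weight $w(r_1,\dots,r_k)=\prod_{i=1}^k\phi_{r_{i+1}}(u_{r_i})$ (indices mod $k$); the tuple is unitary if $w(r_1,\dots,r_k)+(-1)^{k+1}w(r_k,\dots,r_1)^{\sqrt q}=0$, non-unitary otherwise. *)

theory Defs
  imports Main
begin

text \<open>V = 'n \<Rightarrow> 'a, a finite-dimensional vector space over the field 'a (coordinates
indexed by the finite type 'n). Linear functionals are given by coefficient vectors.\<close>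

definition pair :: "('n::finite \<Rightarrow> 'a::field) \<Rightarrow> ('n \<Rightarrow> 'a) \<Rightarrow> 'a" where
  "pair f x = (\<Sum>i\<in>UNIV. f i * x i)"

definition tv :: "('n::finite \<Rightarrow> 'a::field) \<Rightarrow> ('n \<Rightarrow> 'a) \<Rightarrow> ('n \<Rightarrow> 'a) \<Rightarrow> ('n \<Rightarrow> 'a)" where
  "tv u f = (\<lambda>x i. x i + pair f x * u i)"

definition rep :: "(('n::finite \<Rightarrow> 'a::field) \<Rightarrow> ('n \<Rightarrow> 'a)) \<Rightarrow> ('n \<Rightarrow> 'a) \<Rightarrow> ('n \<Rightarrow> 'a) \<Rightarrow> bool" where
  "rep s u f \<longleftrightarrow> u \<noteq> (\<lambda>_. 0) \<and> f \<noteq> (\<lambda>_. 0) \<and> pair f u = 0 \<and> s = tv u f"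

definition transvection :: "(('n::finite \<Rightarrow> 'a::field) \<Rightarrow> ('n \<Rightarrow> 'a)) \<Rightarrow> bool" where
  "transvection s \<longleftrightarrow> (\<exists>u f. rep s u f)"

definition edge :: "(('n::finite \<Rightarrow> 'a::field) \<Rightarrow> ('n \<Rightarrow> 'a)) \<Rightarrow> (('n \<Rightarrow> 'a) \<Rightarrow> ('n \<Rightarrow> 'a)) \<Rightarrow> bool" where
  "edge s t \<longleftrightarrow> (\<exists>us fs ut ft. rep s us fs \<and> rep t ut ft \<and> pair ft us \<noteq> 0)"

definition two_way :: "(('n::finite \<Rightarrow> 'a::field) \<Rightarrow> ('n \<Rightarrow> 'a)) \<Rightarrow> (('n \<Rightarrow> 'a) \<Rightarrow> ('n \<Rightarrow> 'a)) \<Rightarrow> bool" where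
  "two_way s t \<longleftrightarrow> edge s t \<and> edge t s"

definition one_way :: "(('n::finite \<Rightarrow> 'a::field) \<Rightarrow> ('n \<Rightarrow> 'a)) \<Rightarrow> (('n \<Rightarrow> 'a) \<Rightarrow> ('n \<Rightarrow> 'a)) \<Rightarrow> bool" where
  "one_way s t \<longleftrightarrow> edge s t \<and> \<not> edge t s"

definition conj :: "(('n::finite \<Rightarrow> 'a::field) \<Rightarrow> ('n \<Rightarrow> 'a)) \<Rightarrow> (('n \<Rightarrow> 'a) \<Rightarrow> ('n \<Rightarrow> 'a)) \<Rightarrow> (('n \<Rightarrow> 'a) \<Rightarrow> ('n \<Rightarrow> 'a))" where
  "conj s g = inv g \<circ> s \<circ> g"

definition weight :: "(('n::finite \<Rightarrow> 'a::field) \<times> ('n \<Rightarrow> 'a)) list \<Rightarrow> 'a" where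
  "weight rs = (\<Prod>i<length rs. pair (snd (rs ! ((i + 1) mod length rs))) (fst (rs ! i)))"

text \<open>Unitary tuple, with sq = sqrt q (the Frobenius exponent).
  The weight does not depend on the chosen representatives.\<close>
definition unitary :: "nat \<Rightarrow> (('n::finite \<Rightarrow> 'a::field) \<Rightarrow> ('n \<Rightarrow> 'a)) list \<Rightarrow> bool" where
  "unitary sq ss \<longleftrightarrow> (\<exists>rs. length rs = length ss \<and>
      (\<forall>i<length ss. rep (ss ! i) (fst (rs ! i)) (snd (rs ! i))) \<and>
      weight rs + (-1) ^ (length ss + 1) * (weight (rev rs)) ^ sq = 0)"

end

theory Submission
  imports Defs
begin

text \<open>A transvection determines its representative \<open>(u, \<phi>)\<close> up to \<open>(c u, c\<^sup>-\<^sup>1 \<phi>)\<close>, so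
\<open>\<phi>\<^sub>t(u\<^sub>s) \<noteq> 0\<close> does not depend on the chosen representatives. If the edges of a triangle
all run one way round but not all of them run back, its weight is nonzero while the weight of
the reversed triangle is zero, so it cannot be unitary, whatever the Frobenius exponent.
Conjugating \<open>1 + u \<otimes> \<phi>\<close> by \<open>g = 1 + u\<^sub>2 \<otimes> \<phi>\<^sub>2\<close> gives \<open>1 + g\<^sup>-\<^sup>1u \<otimes> \<phi>\<circ>g\<close>, which preserves all
values \<open>\<phi>\<^sub>t(u\<^sub>s)\<close> and hence the edges among \<open>s\<^sub>3, s\<^sub>4, s\<^sub>5\<close>. When \<open>s\<^sub>1\<close> and \<open>s\<^sub>3\<close> are not adjacent,
the new values are \<open>\<phi>\<^sub>3(g u\<^sub>1) = \<phi>\<^sub>3(u\<^sub>2) \<phi>\<^sub>2(u\<^sub>1)\<close> and \<open>\<phi>\<^sub>1(g\<^sup>-\<^sup>1u\<^sub>3) = -\<phi>\<^sub>2(u\<^sub>3) \<phi>\<^sub>1(u\<^sub>2)\<close>, both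
nonzero because \<open>s\<^sub>2\<close> is two-way adjacent to \<open>s\<^sub>1\<close> and to \<open>s\<^sub>3\<close>.\<close>

lemma pair_add_scaled_right: "pair f (\<lambda>i. x i + c * u i) = pair f x + c * pair f u"
  by (simp add: pair_def sum.distrib sum_distrib_left algebra_simps)

lemma pair_add_scaled_left: "pair (\<lambda>i. f i + c * g i) x = pair f x + c * pair g x"
  by (simp add: pair_def sum.distrib sum_distrib_left algebra_simps)

lemma pair_scale_right: "pair f (\<lambda>i. c * u i) = c * pair f u"
  by (simp add: pair_def sum_distrib_left algebra_simps)

lemma pair_uminus_right: "pair f (\<lambda>i. - u i) = - pair f u"
  by (simp add: pair_def sum_negf)

lemma pair_zero_left [simp]: "pair (\<lambda>_. 0) x = 0"
  by (simp add: pair_def)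

lemma pair_zero_right [simp]: "pair f (\<lambda>_. 0) = 0"
  by (simp add: pair_def)

lemma pair_indicator: "pair f (\<lambda>j. if j = i then 1 else 0) = f i"
  by (simp add: pair_def if_distrib cong: if_cong)

lemma nonzero_functional_witness:
  assumes "f \<noteq> (\<lambda>_. 0)"
  obtains x where "pair f x \<noteq> 0"
proof -
  obtain i where "f i \<noteq> 0" using assms by auto
  then show thesis using that pair_indicator[of f i] by metis
qed

lemma pair_tv: "pair g (tv u f x) = pair g x + pair f x * pair g u"
  unfolding tv_def by (rule pair_add_scaled_right)

lemma tv_add_scaled: "tv w h (\<lambda>i. x i + c * u i) = (\<lambda>i. tv w h x i + c * tv w h u i)"
  by (simp add: tv_def pair_add_scaled_right fun_eq_iff algebra_simps)

lemma tv_zero [simp]: "tv u f (\<lambda>_. 0) = (\<lambda>_. 0)"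
  by (simp add: tv_def)

lemma tv_uminus_tv:
  assumes "pair f u = 0"
  shows "tv (\<lambda>i. - u i) f (tv u f x) = x"
  using assms by (simp add: tv_def pair_add_scaled_right fun_eq_iff)

lemma tv_tv_uminus:
  assumes "pair f u = 0"
  shows "tv u f (tv (\<lambda>i. - u i) f x) = x"
  using tv_uminus_tv[of f "\<lambda>i. - u i"] assms by (simp add: pair_uminus_right)

lemma inv_tv:
  assumes "pair f u = 0"
  shows "inv (tv u f) = tv (\<lambda>i. - u i) f"
  by (rule inv_unique_comp) (simp_all add: fun_eq_iff tv_uminus_tv tv_tv_uminus assms)

lemma rep_unique_up_to_scalar:
  assumes "rep s u f" "rep s u' f'"
  obtains c where "c \<noteq> 0" "u' = (\<lambda>i. c * u i)" "\<And>x. pair f x = c * pair f' x"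
proof -
  have rank_one: "pair f x * u i = pair f' x * u' i" for x i
  proof -
    have "tv u f x i = tv u' f' x i" using assms by (simp add: rep_def)
    then show ?thesis by (simp add: tv_def)
  qed
  obtain x0 where fx0: "pair f x0 \<noteq> 0"
    using assms(1) nonzero_functional_witness by (auto simp: rep_def)
  obtain k where uk: "u k \<noteq> 0" using assms(1) by (auto simp: rep_def)
  have f'x0: "pair f' x0 \<noteq> 0" using rank_one[of x0 k] fx0 uk by auto
  define c where "c = pair f x0 / pair f' x0"
  have u': "u' = (\<lambda>i. c * u i)"
    using rank_one[of x0] f'x0 by (simp add: c_def fun_eq_iff field_simps)
  have "pair f x = c * pair f' x" for x
    using rank_one[of x k] uk by (simp add: u' algebra_simps)
  moreover have "c \<noteq> 0" using fx0 f'x0 by (simp add: c_def)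
  ultimately show thesis using that u' by blast
qed

lemma edge_iff_pair:
  assumes "rep s us fs" "rep t ut ft"
  shows "edge s t \<longleftrightarrow> pair ft us \<noteq> 0"
proof
  assume "edge s t"
  then obtain us' fs' ut' ft' where r: "rep s us' fs'" "rep t ut' ft'" "pair ft' us' \<noteq> 0"
    unfolding edge_def by blast
  obtain c where "c \<noteq> 0" "us' = (\<lambda>i. c * us i)"
    using rep_unique_up_to_scalar[OF assms(1) r(1)] by blast
  with r(3) have "pair ft' us \<noteq> 0" by (simp add: pair_scale_right)
  moreover obtain d where "d \<noteq> 0" "\<And>x. pair ft x = d * pair ft' x"
    using rep_unique_up_to_scalar[OF assms(2) r(2)] by blast
  ultimately show "pair ft us \<noteq> 0" by simp
next
  assume "pair ft us \<noteq> 0"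
  then show "edge s t" using assms unfolding edge_def by blast
qed

lemma pair_conj_functional: "pair (\<lambda>i. f i + pair f u2 * f2 i) x = pair f (tv u2 f2 x)"
  by (simp add: pair_add_scaled_left pair_tv)

lemma pair_conj:
  assumes "pair f2 u2 = 0"
  shows "pair (\<lambda>i. f i + pair f u2 * f2 i) (tv (\<lambda>i. - u2 i) f2 u) = pair f u"
  by (simp add: pair_conj_functional tv_tv_uminus assms)

lemma rep_conj:
  assumes g: "rep g u2 f2" and s: "rep s u f"
  shows "rep (conj s g) (tv (\<lambda>i. - u2 i) f2 u) (\<lambda>i. f i + pair f u2 * f2 i)"
    (is "rep _ ?u ?f")
proof -
  have p22: "pair f2 u2 = 0" and g_tv: "g = tv u2 f2" and s_tv: "s = tv u f"
    using g s by (simp_all add: rep_def)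
  have "conj s g x = tv ?u ?f x" for x
  proof -
    define y where "y = tv u2 f2 x"
    have "conj s g x = tv (\<lambda>i. - u2 i) f2 (\<lambda>i. y i + pair f y * u i)"
      unfolding conj_def g_tv inv_tv[OF p22] by (simp add: s_tv y_def tv_def)
    also have "\<dots> = (\<lambda>i. x i + pair ?f x * ?u i)"
      by (simp add: tv_add_scaled y_def tv_uminus_tv p22 pair_conj_functional)
    finally show ?thesis by (simp add: tv_def)
  qed
  moreover have "?u \<noteq> (\<lambda>_. 0)"
    using s tv_tv_uminus[OF p22, of u] by (auto simp: rep_def)
  moreover have "?f \<noteq> (\<lambda>_. 0)"
  proof -
    obtain x where "pair f x \<noteq> 0"
      using s nonzero_functional_witness by (auto simp: rep_def)
    then have "pair ?f (tv (\<lambda>i. - u2 i) f2 x) \<noteq> 0" by (simp add: pair_conj p22)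
    then show ?thesis by auto
  qed
  moreover have "pair ?f ?u = 0" using s by (simp add: pair_conj p22 rep_def)
  ultimately show ?thesis by (simp add: rep_def fun_eq_iff)
qed

lemma edge_conj_iff:
  assumes "transvection g" "transvection s" "transvection t"
  shows "edge (conj s g) (conj t g) \<longleftrightarrow> edge s t"
proof -
  obtain u2 f2 us fs ut ft where g: "rep g u2 f2" and s: "rep s us fs" and t: "rep t ut ft"
    using assms unfolding transvection_def by blast
  then have "pair f2 u2 = 0" by (simp add: rep_def)
  then show ?thesis
    using edge_iff_pair[OF rep_conj[OF g s] rep_conj[OF g t]] edge_iff_pair[OF s t]
    by (simp add: pair_conj)
qed

lemma two_way_conj_of_not_adjacent:
  assumes "transvection s1" "transvection s2" "transvection s3"
    and "two_way s1 s2" "two_way s2 s3" "\<not> edge s1 s3" "\<not> edge s3 s1"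
  shows "two_way s1 (conj s3 s2)"
proof -
  obtain u1 f1 u2 f2 u3 f3 where r1: "rep s1 u1 f1" and r2: "rep s2 u2 f2" and r3: "rep s3 u3 f3"
    using assms(1-3) unfolding transvection_def by blast
  note r3' = rep_conj[OF r2 r3]
  have "pair f3 u1 = 0" "pair f1 u3 = 0"
    using assms(6,7) edge_iff_pair[OF r1 r3] edge_iff_pair[OF r3 r1] by simp_all
  moreover have "pair f2 u1 \<noteq> 0" "pair f1 u2 \<noteq> 0" "pair f3 u2 \<noteq> 0" "pair f2 u3 \<noteq> 0"
    using assms(4,5) edge_iff_pair[OF r1 r2] edge_iff_pair[OF r2 r1]
      edge_iff_pair[OF r2 r3] edge_iff_pair[OF r3 r2]
    by (simp_all add: two_way_def)
  ultimately show ?thesis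
    using edge_iff_pair[OF r1 r3'] edge_iff_pair[OF r3' r1]
    by (simp add: two_way_def pair_add_scaled_left pair_tv pair_uminus_right)
qed

lemma weight_triangle:
  "weight [a, b, c] = pair (snd b) (fst a) * pair (snd c) (fst b) * pair (snd a) (fst c)"
proof -
  have "{..<length [a, b, c]} = {0, 1, 2}" by auto
  then show ?thesis unfolding weight_def by (simp add: mult_ac)
qed

lemma not_unitary_triangle:
  assumes "edge x y" "edge y z" "edge z x" "\<not> (edge y x \<and> edge z y \<and> edge x z)" "sq > 0"
  shows "\<not> unitary sq [x, y, z]"
proof
  assume "unitary sq [x, y, z]"
  then obtain rs where len: "length rs = length [x, y, z]"
    and reps: "\<forall>i<length [x, y, z]. rep ([x, y, z] ! i) (fst (rs ! i)) (snd (rs ! i))"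
    and unit: "weight rs + (-1) ^ (length [x, y, z] + 1) * weight (rev rs) ^ sq = 0"
    unfolding unitary_def by blast
  obtain a b c where rs: "rs = [a, b, c]"
    using len by (auto simp: length_Suc_conv)
  have ra: "rep x (fst a) (snd a)" and rb: "rep y (fst b) (snd b)" and rc: "rep z (fst c) (snd c)"
    using reps by (auto simp: rs less_Suc_eq)
  have "weight rs \<noteq> 0"
    using edge_iff_pair[OF ra rb] edge_iff_pair[OF rb rc] edge_iff_pair[OF rc ra] assms(1-3)
    by (simp add: rs weight_triangle)
  moreover have "weight (rev rs) = 0"
    using edge_iff_pair[OF rb ra] edge_iff_pair[OF rc rb] edge_iff_pair[OF ra rc] assms(4)
    by (auto simp: rs weight_triangle)
  ultimately show False using unit assms(5) by (simp add: zero_power)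
qed

theorem lemma4p10:
  fixes s1 s2 s3 s4 s5 :: "('n::finite \<Rightarrow> 'a::field) \<Rightarrow> ('n \<Rightarrow> 'a)"
    and q sq :: nat
  assumes fin: "finite (UNIV :: 'a set)" and card: "card (UNIV :: 'a set) = q"
    and odd: "odd q" and sq: "sq ^ 2 = q"
    and t1: "transvection s1" and t2: "transvection s2" and t3: "transvection s3"
    and t4: "transvection s4" and t5: "transvection s5"
    and e12: "two_way s1 s2" and e23: "two_way s2 s3"
    and e34: "edge s3 s4" and e45: "edge s4 s5" and e53: "edge s5 s3"
    and n13: "\<not> two_way s1 s3"
  shows "(one_way s1 s3 \<longrightarrow> \<not> unitary sq [s1, s3, s2])
       \<and> (one_way s3 s1 \<longrightarrow> \<not> unitary sq [s1, s2, s3])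
       \<and> (\<not> edge s1 s3 \<and> \<not> edge s3 s1 \<longrightarrow>
            two_way s1 (conj s3 s2)
            \<and> edge (conj s3 s2) (conj s4 s2)
            \<and> edge (conj s4 s2) (conj s5 s2)
            \<and> edge (conj s5 s2) (conj s3 s2))"
proof -
  have "sq > 0" using sq odd by (cases sq) auto
  then have "one_way s1 s3 \<longrightarrow> \<not> unitary sq [s1, s3, s2]"
    and "one_way s3 s1 \<longrightarrow> \<not> unitary sq [s1, s2, s3]"
    using not_unitary_triangle[of s1 s3 s2 sq] not_unitary_triangle[of s1 s2 s3 sq] e12 e23
    unfolding one_way_def two_way_def by blast+
  moreover have "two_way s1 (conj s3 s2)" if "\<not> edge s1 s3" "\<not> edge s3 s1"
    using two_way_conj_of_not_adjacent t1 t2 t3 e12 e23 that by blast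
  moreover have "edge (conj s3 s2) (conj s4 s2)" "edge (conj s4 s2) (conj s5 s2)"
    "edge (conj s5 s2) (conj s3 s2)"
    using edge_conj_iff t2 t3 t4 t5 e34 e45 e53 by blast+
  ultimately show ?thesis by blast
qed

end
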